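(* Let $a:\mathbb{R}^n\to\mathbb{R}^m$ be differentiable with each component $a_i$ convex, and let $w\in\mathbb{R}^m$, $w\ge0$. Let $(x,s,y)$ be a point with $s,y\ge0$, $y^Ta(x)>0$ and $\Gamma_{\mathrm{far}}(x,y)\le1/(2R)$ for some $R\in(0,\infty)$, and suppose some minimizer $(\mu^*,x^* )$ (with corresponding $s^*$) of the problem $\min_{x,s,\mu}\mu$ subject to $a(x)+s=\mu w$, $s\ge0$, $\mu\ge0$ satisfies $\|x-x^*\|_\infty\le R$. Then the system $a(x)\le0$ has no solution $x\in\mathbb{R}^n$.
   Context: $\Gamma_{\mathrm{far}}(x,y)=\dfrac{\|\nabla a(x)^Ty\|_1}{a(x)^Ty}$, where $\nabla a(x)$ is the $m\times n$ Jacobian of $a$ at $x$. *)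

theory Defs
  imports "HOL-Analysis.Analysis"
begin

definition norm1 :: "real ^ 'k \<Rightarrow> real" where
  "norm1 v = (\<Sum>i\<in>UNIV. \<bar>v $ i\<bar>)"

definition Gamma_far :: "(real ^ 'n \<Rightarrow> real ^ 'm) \<Rightarrow> real ^ 'n \<Rightarrow> real ^ 'm \<Rightarrow> real" where
  "Gamma_far a x y = norm1 (transpose (jacobian a (at x)) *v y) / (a x \<bullet> y)"

definition phase1_feasible ::
  "(real ^ 'n \<Rightarrow> real ^ 'm) \<Rightarrow> real ^ 'm \<Rightarrow> real \<Rightarrow> real ^ 'n \<Rightarrow> real ^ 'm \<Rightarrow> bool" where
  "phase1_feasible a w \<mu> x s \<longleftrightarrow> a x + s = \<mu> *\<^sub>R w \<and> (\<forall>i. s $ i \<ge> 0) \<and> \<mu> \<ge> 0"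

definition phase1_minimizer ::
  "(real ^ 'n \<Rightarrow> real ^ 'm) \<Rightarrow> real ^ 'm \<Rightarrow> real \<Rightarrow> real ^ 'n \<Rightarrow> real ^ 'm \<Rightarrow> bool" where
  "phase1_minimizer a w \<mu> x s \<longleftrightarrow> phase1_feasible a w \<mu> x s \<and>
     (\<forall>\<mu>' x' s'. phase1_feasible a w \<mu>' x' s' \<longrightarrow> \<mu> \<le> \<mu>')"

end

theory Submission
  imports Defs
begin

text \<open>If the system \<open>a(z) \<le> 0\<close> were solvable, the phase-one problem would have optimal value
  \<open>\<mu>\<^sup>* = 0\<close>, so \<open>a(x\<^sup>*) \<le> 0\<close> and hence \<open>F(x\<^sup>*) \<le> 0\<close> for the convex function \<open>F(v) = a(v)\<^sup>Ty\<close>.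
  But the tangent inequality of \<open>F\<close> at \<open>x\<close> together with Hoelder's inequality gives
  \<open>F(x\<^sup>*) \<ge> F(x) - \<parallel>x - x\<^sup>*\<parallel>\<^sub>\<infinity> \<parallel>\<nabla>a(x)\<^sup>Ty\<parallel>\<^sub>1 \<ge> F(x) - R \<Gamma>(x,y) F(x) \<ge> F(x)/2 > 0\<close>.\<close>

lemma convex_on_sum_fun:
  assumes "finite I" and "convex S" and "\<And>i. i \<in> I \<Longrightarrow> convex_on S (f i)"
  shows "convex_on S (\<lambda>x. \<Sum>i\<in>I. f i x)"
  using assms by (induction I rule: finite_induct) (auto simp: convex_on_const)

lemma convex_on_inner_nonneg:
  fixes a :: "'a::real_vector \<Rightarrow> real ^ 'm"
  assumes "convex S" and "\<And>i. convex_on S (\<lambda>z. a z $ i)" and "\<And>i. y $ i \<ge> 0"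
  shows "convex_on S (\<lambda>z. a z \<bullet> y)"
proof -
  have "convex_on S (\<lambda>z. \<Sum>i\<in>UNIV. y $ i * a z $ i)"
    using assms by (intro convex_on_sum_fun convex_on_cmul) auto
  then show ?thesis
    by (simp add: inner_vec_def mult.commute)
qed

lemma convex_on_above_tangent:
  fixes f :: "'a::real_normed_vector \<Rightarrow> real"
  assumes convex: "convex_on UNIV f" and deriv: "(f has_derivative f') (at x)"
  shows "f x + f' (z - x) \<le> f z"
proof -
  define g where "g t = f (x + t *\<^sub>R (z - x))" for t :: real
  have line: "x + ((1 - t) * p + t * q) *\<^sub>R (z - x)
      = (1 - t) *\<^sub>R (x + p *\<^sub>R (z - x)) + t *\<^sub>R (x + q *\<^sub>R (z - x))" for t p q
    by (simp add: algebra_simps)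
  have "convex_on UNIV g"
    by (rule convex_onI) (use convex_onD[OF convex] in \<open>simp_all add: g_def line\<close>)
  moreover have "(g has_derivative (\<lambda>t. f' (t *\<^sub>R (z - x)))) (at 0)"
    unfolding g_def
    by (rule has_derivative_compose[of "\<lambda>t. x + t *\<^sub>R (z - x)", simplified o_def])
       (auto intro!: derivative_eq_intros deriv)
  then have "(g has_field_derivative f' (z - x)) (at 0)"
    using linear_scale[OF has_derivative_linear[OF deriv]]
    by (simp add: has_field_derivative_def mult.commute[of _ "f' (z - x)"])
  ultimately have "g 1 - g 0 \<ge> f' (z - x) * (1 - 0)"
    by (intro convex_on_imp_above_tangent) (auto simp: has_field_derivative_at_within)
  then show ?thesis
    by (simp add: g_def)
qed

lemma has_derivative_inner_jacobian:
  fixes a :: "real ^ 'n \<Rightarrow> real ^ 'm"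
  assumes "a differentiable (at x)"
  shows "((\<lambda>v. a v \<bullet> y) has_derivative (\<lambda>h. h \<bullet> (transpose (jacobian a (at x)) *v y))) (at x)"
proof -
  have "((\<lambda>v. a v \<bullet> y) has_derivative (\<lambda>h. (jacobian a (at x) *v h) \<bullet> y)) (at x)"
    using jacobian_works[THEN iffD1, OF assms] by (auto intro!: derivative_eq_intros)
  moreover have "(jacobian a (at x) *v h) \<bullet> y = h \<bullet> (transpose (jacobian a (at x)) *v y)" for h
    by (metis dot_lmul_matrix inner_commute vector_transpose_matrix)
  ultimately show ?thesis
    by simp
qed

lemma abs_inner_le_infnorm_norm1:
  fixes u v :: "real ^ 'n"
  shows "\<bar>u \<bullet> v\<bar> \<le> infnorm u * norm1 v"
proof -
  have "\<bar>u \<bullet> v\<bar> \<le> (\<Sum>i\<in>UNIV. \<bar>u $ i\<bar> * \<bar>v $ i\<bar>)"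
    unfolding inner_vec_def by (rule order_trans[OF sum_abs]) (simp add: abs_mult)
  also have "\<dots> \<le> (\<Sum>i\<in>UNIV. infnorm u * \<bar>v $ i\<bar>)"
    by (intro sum_mono mult_right_mono component_le_infnorm_cart) auto
  finally show ?thesis
    by (simp add: norm1_def sum_distrib_left)
qed

lemma inner_nonpos_nonneg_cart:
  fixes u v :: "real ^ 'n"
  assumes "\<And>i. u $ i \<le> 0" and "\<And>i. v $ i \<ge> 0"
  shows "u \<bullet> v \<le> 0"
  unfolding inner_vec_def using assms by (simp add: sum_nonpos mult_nonpos_nonneg)

lemma phase1_minimizer_value_zero:
  assumes "phase1_minimizer a w \<mu> x s" and "\<And>i. a z $ i \<le> 0"
  shows "\<mu> = 0"
proof -
  have "phase1_feasible a w 0 z (- a z)"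
    using assms(2) by (simp add: phase1_feasible_def)
  with assms(1) have "\<mu> \<le> 0"
    unfolding phase1_minimizer_def by blast
  moreover have "\<mu> \<ge> 0"
    using assms(1) by (simp add: phase1_minimizer_def phase1_feasible_def)
  ultimately show ?thesis
    by simp
qed

lemma phase1_feasible_zero_nonpos:
  assumes "phase1_feasible a w 0 x s"
  shows "a x $ i \<le> 0"
proof -
  have "a x $ i + s $ i = 0" and "s $ i \<ge> 0"
    using assms by (auto simp: phase1_feasible_def vec_eq_iff)
  then show ?thesis
    by linarith
qed

theorem mainTheorem8:
  fixes a :: "real ^ 'n \<Rightarrow> real ^ 'm"
    and w :: "real ^ 'm"
    and x :: "real ^ 'n" and s y :: "real ^ 'm"
    and R :: real
    and \<mu>star :: real and xstar :: "real ^ 'n" and sstar :: "real ^ 'm"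
  assumes diff: "\<And>z. a differentiable (at z)"
    and conv: "\<And>i. convex_on UNIV (\<lambda>z. a z $ i)"
    and w_nonneg: "\<And>i. w $ i \<ge> 0"
    and s_nonneg: "\<And>i. s $ i \<ge> 0"
    and y_nonneg: "\<And>i. y $ i \<ge> 0"
    and pos: "a x \<bullet> y > 0"
    and R_pos: "R > 0"
    and gamma: "Gamma_far a x y \<le> 1 / (2 * R)"
    and minim: "phase1_minimizer a w \<mu>star xstar sstar"
    and close: "infnorm (x - xstar) \<le> R"
  shows "\<not> (\<exists>z. \<forall>i. a z $ i \<le> 0)"
proof
  assume "\<exists>z. \<forall>i. a z $ i \<le> 0"
  then obtain z where "\<And>i. a z $ i \<le> 0" by blast
  then have "\<mu>star = 0"
    by (rule phase1_minimizer_value_zero[OF minim])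
  then have "phase1_feasible a w 0 xstar sstar"
    using minim by (simp add: phase1_minimizer_def)
  then have Fxstar: "a xstar \<bullet> y \<le> 0"
    by (intro inner_nonpos_nonneg_cart phase1_feasible_zero_nonpos y_nonneg)
  define G where "G = transpose (jacobian a (at x)) *v y"
  have tangent: "a x \<bullet> y + (xstar - x) \<bullet> G \<le> a xstar \<bullet> y"
    using convex_on_above_tangent[OF convex_on_inner_nonneg[OF convex_UNIV conv y_nonneg]
        has_derivative_inner_jacobian[OF diff]]
    unfolding G_def .
  have "\<bar>(xstar - x) \<bullet> G\<bar> \<le> infnorm (xstar - x) * norm1 G"
    by (rule abs_inner_le_infnorm_norm1)
  also have "\<dots> \<le> R * norm1 G"
    using close by (intro mult_right_mono) (simp_all add: infnorm_sub norm1_def sum_nonneg)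
  finally have "\<bar>(xstar - x) \<bullet> G\<bar> \<le> R * norm1 G" .
  moreover have "R * norm1 G \<le> (a x \<bullet> y) / 2"
    using gamma pos R_pos by (simp add: Gamma_far_def G_def divide_le_eq field_simps)
  ultimately show False
    using tangent Fxstar pos by linarith
qed

end
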